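(* Fix $x>1$, let $p_1,p_2\ge n$, $p=p_1+p_2$, and let $0<\delta_n\ll1$. Let $$E_n=\left\{(x_1,\dots,x_n)\in\Delta_n:\ \tfrac{p_1}{p}(1-\delta_n)<x_1,\ x_{n-1}<\tfrac{p_1}{p}(1+\delta_n),\ \tfrac{p_1}{p}x<x_n<\tfrac{p_1}{p}(x+\delta_n)\right\},$$ where $\Delta_n=\{(x_1,\dots,x_n)\in[0,1]^n:x_1\le\dots\le x_n\}$. Set $\alpha_2=\frac12-\frac{\delta_n}{x-1}$, $\alpha_1=\frac12+\frac{\delta_n}{x-1}$ and $\bar x_i=\frac{px_i-p_1}{p_1(x-1)}$. Then for all $(x_1,\dots,x_n)\in E_n$, $$\prod_{i=1}^{n-1}(x_n-x_i)\le\left(\frac{p_1(x-1)}{p}\right)^{n-1}\exp\left\{(n+o(n))\frac{px_n-p_1x}{p_1(x-1)}-\sum_{i=1}^{n-1}\bar x_i-\alpha_2\sum_{i=1}^{n-1}\bar x_i^2\right\}$$ and $$\prod_{i=1}^{n-1}(x_n-x_i)\ge\left(\frac{p_1(x-1)}{p}\right)^{n-1}\exp\left\{-\sum_{i=1}^{n-1}\bar x_i-\alpha_1\sum_{i=1}^{n-1}\bar x_i^2\right\}.$$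
   Context: $\delta_n\ll1$ means $\delta_n\to0$ as $n\to\infty$. In the upper bound, $n+o(n)$ denotes a quantity whose ratio to $n$ tends to $1$ as $n\to\infty$ (the bound holds for $n$ large enough). *)

theory Defs
  imports Complex_Main
begin

text \<open>Points of R^n are encoded as functions nat => real, coordinates indexed by 1..n.\<close>

definition simplex :: "nat \<Rightarrow> (nat \<Rightarrow> real) set" where
  "simplex n = {y. (\<forall>i\<in>{1..n}. 0 \<le> y i \<and> y i \<le> 1) \<and>
                   (\<forall>i j. 1 \<le> i \<longrightarrow> i \<le> j \<longrightarrow> j \<le> n \<longrightarrow> y i \<le> y j)}"

definition En :: "real \<Rightarrow> real \<Rightarrow> real \<Rightarrow> real \<Rightarrow> nat \<Rightarrow> (nat \<Rightarrow> real) set" where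
  "En x p1 p2 d n = {y \<in> simplex n.
      p1 / (p1 + p2) * (1 - d) < y 1 \<and> y (n - 1) < p1 / (p1 + p2) * (1 + d) \<and>
      p1 / (p1 + p2) * x < y n \<and> y n < p1 / (p1 + p2) * (x + d)}"

definition xbar :: "real \<Rightarrow> real \<Rightarrow> real \<Rightarrow> real \<Rightarrow> real" where
  "xbar x p1 p2 t = ((p1 + p2) * t - p1) / (p1 * (x - 1))"

end

theory Submission
  imports Defs
begin

text \<open>
  With \<open>K = p\<^sub>1(x-1)/p\<close>, \<open>u\<^sub>i = xbar(x\<^sub>i)\<close> and \<open>t = xbar(x\<^sub>n) - 1\<close>, each factor is
  \<open>x\<^sub>n - x\<^sub>i = K (1 + t - u\<^sub>i)\<close>, where on \<open>E\<^sub>n\<close> we have \<open>t > 0\<close> and \<open>|u\<^sub>i| < e = \<delta>\<^sub>n/(x-1)\<close>.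
  For \<open>|u| \<le> e \<le> 1/2\<close> the logarithm is squeezed,
  \<open>-u - (1/2+e)u\<^sup>2 \<le> ln (1-u) \<le> -u - (1/2-e)u\<^sup>2\<close>, because \<open>ln (1-v) + v + k v\<^sup>2\<close> has
  derivative \<open>v (2k - 1/(1-v))\<close>, whose sign is that of \<open>\<plusminus>v\<close> for \<open>k = 1/2 \<plusminus> e\<close>.
  The lower bound follows by dropping \<open>t\<close>; for the upper bound
  \<open>1 + t - u = (1-u)(1 + t/(1-u)) \<le> (1-u) exp (t/(1-e))\<close>, and the \<open>n-1\<close> factors
  \<open>exp (t/(1-e))\<close> give the coefficient \<open>n/(1-e) = n + o(n)\<close> of \<open>t\<close>.
\<close>

lemma min_at_zero_by_derivative_sign:
  fixes f f' :: "real \<Rightarrow> real"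
  assumes deriv: "\<And>v. \<bar>v\<bar> \<le> \<bar>u\<bar> \<Longrightarrow> (f has_real_derivative f' v) (at v)"
    and sign: "\<And>v. \<bar>v\<bar> \<le> \<bar>u\<bar> \<Longrightarrow> 0 \<le> v * f' v"
  shows "f 0 \<le> f u"
proof (cases u "0::real" rule: linorder_cases)
  case less
  then obtain z where z: "u < z" "z < 0" "f 0 - f u = (0 - u) * f' z"
    using MVT2[of u 0 f f'] deriv by force
  have "f' z \<le> 0"
    using sign[of z] z by (simp add: zero_le_mult_iff)
  then have "0 \<le> u * f' z"
    using less by (simp add: mult_nonpos_nonpos)
  then show ?thesis
    using z by simp
next
  case greater
  then obtain z where z: "0 < z" "z < u" "f u - f 0 = (u - 0) * f' z"
    using MVT2[of 0 u f f'] deriv by force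
  have "0 \<le> f' z"
    using sign[of z] z by (simp add: zero_le_mult_iff)
  then have "0 \<le> u * f' z"
    using greater by simp
  then show ?thesis
    using z by simp
qed simp

lemma has_real_derivative_ln_one_minus_quadratic:
  assumes "v < 1"
  shows "((\<lambda>v. ln (1 - v) + v + k * v\<^sup>2) has_real_derivative v * (2 * k - 1 / (1 - v))) (at v)"
  using assms by (auto intro!: derivative_eq_intros simp: field_simps)

lemma ln_one_minus_ge_quadratic:
  fixes e u :: real
  assumes "e \<le> 1/2" "\<bar>u\<bar> \<le> e"
  shows "- u - (1/2 + e) * u\<^sup>2 \<le> ln (1 - u)"
proof -
  let ?f = "\<lambda>v. ln (1 - v) + v + (1/2 + e) * v\<^sup>2"
  have "?f 0 \<le> ?f u"
  proof (rule min_at_zero_by_derivative_sign)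
    fix v :: real assume v: "\<bar>v\<bar> \<le> \<bar>u\<bar>"
    then have "v \<le> e" "v < 1" using assms by linarith+
    show "(?f has_real_derivative v * (2 * (1/2 + e) - 1 / (1 - v))) (at v)"
      using has_real_derivative_ln_one_minus_quadratic[OF \<open>v < 1\<close>] .
    have "0 \<le> e * (1 - 2 * e)"
      using assms by (intro mult_nonneg_nonneg) auto
    then have "1 \<le> (1 + 2 * e) * (1 - e)"
      by (simp add: algebra_simps)
    also have "\<dots> \<le> (1 + 2 * e) * (1 - v)"
      using \<open>v \<le> e\<close> assms by (intro mult_left_mono) auto
    finally have "1 / (1 - v) \<le> 2 * (1/2 + e)"
      using \<open>v < 1\<close> by (simp add: divide_le_eq algebra_simps)
    then show "0 \<le> v * (v * (2 * (1/2 + e) - 1 / (1 - v)))"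
      by (simp flip: mult.assoc)
  qed
  then show ?thesis by simp
qed

lemma ln_one_minus_le_quadratic:
  fixes e u :: real
  assumes "e \<le> 1/2" "\<bar>u\<bar> \<le> e"
  shows "ln (1 - u) \<le> - u - (1/2 - e) * u\<^sup>2"
proof -
  let ?f = "\<lambda>v. - (ln (1 - v) + v + (1/2 - e) * v\<^sup>2)"
  have "?f 0 \<le> ?f u"
  proof (rule min_at_zero_by_derivative_sign)
    fix v :: real assume v: "\<bar>v\<bar> \<le> \<bar>u\<bar>"
    then have "- e \<le> v" "v < 1" using assms by linarith+
    show "(?f has_real_derivative - (v * (2 * (1/2 - e) - 1 / (1 - v)))) (at v)"
      using DERIV_minus[OF has_real_derivative_ln_one_minus_quadratic[OF \<open>v < 1\<close>]] .
    have "(1 - 2 * e) * (1 - v) \<le> (1 - 2 * e) * (1 + e)"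
      using \<open>- e \<le> v\<close> assms by (intro mult_left_mono) auto
    also have "\<dots> \<le> 1"
      using mult_nonneg_nonneg[of e "1 + 2 * e"] assms by (simp add: algebra_simps)
    finally have "2 * (1/2 - e) \<le> 1 / (1 - v)"
      using \<open>v < 1\<close> by (simp add: le_divide_eq algebra_simps)
    then show "0 \<le> v * - (v * (2 * (1/2 - e) - 1 / (1 - v)))"
      using mult_nonneg_nonpos[of "v * v"] by (simp flip: mult.assoc)
  qed
  then show ?thesis by simp
qed

lemma exp_quadratic_le_shifted_factor:
  fixes e t u :: real
  assumes "e \<le> 1/2" "\<bar>u\<bar> \<le> e" "0 \<le> t"
  shows "exp (- u - (1/2 + e) * u\<^sup>2) \<le> 1 + t - u"
proof -
  have "exp (- u - (1/2 + e) * u\<^sup>2) \<le> exp (ln (1 - u))"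
    using ln_one_minus_ge_quadratic[OF assms(1,2)] by simp
  also have "\<dots> = 1 - u"
    using assms by simp
  finally show ?thesis
    using assms(3) by simp
qed

lemma shifted_factor_le_exp_quadratic:
  fixes e t u :: real
  assumes "e \<le> 1/2" "\<bar>u\<bar> \<le> e" "0 \<le> t"
  shows "1 + t - u \<le> exp (t / (1 - e) - u - (1/2 - e) * u\<^sup>2)"
proof -
  have "u < 1" "1 - e \<le> 1 - u" "0 < 1 - e"
    using assms by auto
  have "1 + t - u = (1 - u) * (1 + t / (1 - u))"
    using \<open>u < 1\<close> by (simp add: field_simps)
  also have "\<dots> \<le> (1 - u) * exp (t / (1 - u))"
    using \<open>u < 1\<close> by (intro mult_left_mono exp_ge_add_one_self) auto
  also have "\<dots> \<le> exp (- u - (1/2 - e) * u\<^sup>2) * exp (t / (1 - e))"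
  proof (rule mult_mono)
    have "1 - u = exp (ln (1 - u))"
      using \<open>u < 1\<close> by simp
    also have "\<dots> \<le> exp (- u - (1/2 - e) * u\<^sup>2)"
      using ln_one_minus_le_quadratic[OF assms(1,2)] by simp
    finally show "1 - u \<le> exp (- u - (1/2 - e) * u\<^sup>2)" .
    show "exp (t / (1 - u)) \<le> exp (t / (1 - e))"
      using assms(3) \<open>1 - e \<le> 1 - u\<close> \<open>0 < 1 - e\<close> by (simp add: divide_left_mono)
  qed auto
  also have "\<dots> = exp (t / (1 - e) - u - (1/2 - e) * u\<^sup>2)"
    by (simp flip: exp_add)
  finally show ?thesis .
qed

lemma prod_shifted_factors_ge:
  fixes e t :: real and u :: "'a \<Rightarrow> real"
  assumes "finite I" "e \<le> 1/2" "\<And>i. i \<in> I \<Longrightarrow> \<bar>u i\<bar> \<le> e" "0 \<le> t"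
  shows "exp (- (\<Sum>i\<in>I. u i) - (1/2 + e) * (\<Sum>i\<in>I. (u i)\<^sup>2)) \<le> (\<Prod>i\<in>I. 1 + t - u i)"
proof -
  have "exp (- (\<Sum>i\<in>I. u i) - (1/2 + e) * (\<Sum>i\<in>I. (u i)\<^sup>2))
      = (\<Prod>i\<in>I. exp (- u i - (1/2 + e) * (u i)\<^sup>2))"
    using assms(1) by (simp add: exp_sum[symmetric] sum_subtractf sum_negf sum_distrib_left)
  also have "\<dots> \<le> (\<Prod>i\<in>I. 1 + t - u i)"
    using assms by (intro prod_mono conjI exp_quadratic_le_shifted_factor) auto
  finally show ?thesis .
qed

lemma prod_shifted_factors_le:
  fixes e t :: real and u :: "'a \<Rightarrow> real"
  assumes "finite I" "e \<le> 1/2" "\<And>i. i \<in> I \<Longrightarrow> \<bar>u i\<bar> \<le> e" "0 \<le> t"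
  shows "(\<Prod>i\<in>I. 1 + t - u i)
    \<le> exp (card I * t / (1 - e) - (\<Sum>i\<in>I. u i) - (1/2 - e) * (\<Sum>i\<in>I. (u i)\<^sup>2))"
proof -
  have "(\<Prod>i\<in>I. 1 + t - u i) \<le> (\<Prod>i\<in>I. exp (t / (1 - e) - u i - (1/2 - e) * (u i)\<^sup>2))"
  proof (intro prod_mono conjI)
    fix i assume "i \<in> I"
    then show "0 \<le> 1 + t - u i"
      using assms(2-4) by (force simp: abs_le_iff)
    show "1 + t - u i \<le> exp (t / (1 - e) - u i - (1/2 - e) * (u i)\<^sup>2)"
      using assms \<open>i \<in> I\<close> by (intro shifted_factor_le_exp_quadratic) auto
  qed
  also have "\<dots> = exp (card I * t / (1 - e) - (\<Sum>i\<in>I. u i) - (1/2 - e) * (\<Sum>i\<in>I. (u i)\<^sup>2))"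
    using assms(1) by (simp add: exp_sum[symmetric] sum_subtractf sum_distrib_left)
  finally show ?thesis .
qed

lemma xbar_minus_one:
  assumes "x \<noteq> 1" "p1 \<noteq> 0"
  shows "xbar x p1 p2 a - 1 = ((p1 + p2) * a - p1 * x) / (p1 * (x - 1))"
  using assms by (simp add: xbar_def field_simps)

lemma diff_eq_xbar_diff:
  assumes "x \<noteq> 1" "p1 \<noteq> 0" "p1 + p2 \<noteq> 0"
  shows "a - b = p1 * (x - 1) / (p1 + p2) * (xbar x p1 p2 a - xbar x p1 p2 b)"
proof -
  have "xbar x p1 p2 a - xbar x p1 p2 b = (p1 + p2) * (a - b) / (p1 * (x - 1))"
    by (simp add: xbar_def diff_divide_distrib[symmetric] algebra_simps)
  then show ?thesis
    using assms by simp
qed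

lemma prod_diff_eq_xbar:
  assumes "x \<noteq> 1" "p1 \<noteq> 0" "p1 + p2 \<noteq> 0"
  shows "(\<Prod>i\<in>{1..n-1}. y n - y i) = (p1 * (x - 1) / (p1 + p2)) ^ (n - 1) *
           (\<Prod>i\<in>{1..n-1}. xbar x p1 p2 (y n) - xbar x p1 p2 (y i))"
  by (subst diff_eq_xbar_diff[OF assms], subst prod.distrib) simp

lemma En_abs_xbar_less:
  assumes "x > 1" "p1 > 0" "p2 \<ge> 0" "y \<in> En x p1 p2 d n" "i \<in> {1..n-1}"
  shows "\<bar>xbar x p1 p2 (y i)\<bar> < d / (x - 1)"
proof -
  have "y 1 \<le> y i" "y i \<le> y (n - 1)"
    using assms(4,5) by (auto simp: En_def simplex_def)
  then have "p1 / (p1 + p2) * (1 - d) < y i" "y i < p1 / (p1 + p2) * (1 + d)"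
    using assms(4) by (auto simp: En_def)
  then have "p1 - p1 * d < (p1 + p2) * y i" "(p1 + p2) * y i < p1 + p1 * d"
    using assms(2,3) by (simp_all add: field_simps)
  then have "\<bar>(p1 + p2) * y i - p1\<bar> < p1 * d"
    by linarith
  have "0 < p1 * (x - 1)"
    using assms(1,2) by simp
  then have "\<bar>xbar x p1 p2 (y i)\<bar> = \<bar>(p1 + p2) * y i - p1\<bar> / (p1 * (x - 1))"
    by (simp add: xbar_def abs_divide)
  also have "\<dots> < p1 * d / (p1 * (x - 1))"
    using \<open>0 < p1 * (x - 1)\<close> \<open>\<bar>(p1 + p2) * y i - p1\<bar> < p1 * d\<close>
    by (rule divide_strict_right_mono[rotated])
  also have "\<dots> = d / (x - 1)"
    using assms(2) by simp
  finally show ?thesis .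
qed

lemma En_xbar_last_gt_one:
  assumes "x > 1" "p1 > 0" "p2 \<ge> 0" "y \<in> En x p1 p2 d n"
  shows "1 < xbar x p1 p2 (y n)"
proof -
  have "p1 / (p1 + p2) * x < y n"
    using assms(4) by (simp add: En_def)
  then have "p1 * x < (p1 + p2) * y n"
    using assms(2,3) by (simp add: field_simps)
  then show ?thesis
    using assms(1,2) by (simp add: xbar_def field_simps)
qed

lemma En_prod_diff_ge:
  fixes x p1 p2 d :: real
  assumes "x > 1" "p1 > 0" "p2 \<ge> 0" "d / (x - 1) \<le> 1/2" "y \<in> En x p1 p2 d n"
  shows "(p1 * (x - 1) / (p1 + p2)) ^ (n - 1) *
           exp (- (\<Sum>i\<in>{1..n-1}. xbar x p1 p2 (y i))
                - (1/2 + d / (x - 1)) * (\<Sum>i\<in>{1..n-1}. (xbar x p1 p2 (y i))\<^sup>2))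
         \<le> (\<Prod>i\<in>{1..n-1}. y n - y i)"
proof -
  let ?t = "xbar x p1 p2 (y n) - 1" and ?u = "\<lambda>i. xbar x p1 p2 (y i)"
  have nz: "x \<noteq> 1" "p1 \<noteq> 0" "p1 + p2 \<noteq> 0"
    using assms(1-3) by auto
  have "(p1 * (x - 1) / (p1 + p2)) ^ (n - 1) *
           exp (- (\<Sum>i\<in>{1..n-1}. ?u i) - (1/2 + d / (x - 1)) * (\<Sum>i\<in>{1..n-1}. (?u i)\<^sup>2))
      \<le> (p1 * (x - 1) / (p1 + p2)) ^ (n - 1) * (\<Prod>i\<in>{1..n-1}. 1 + ?t - ?u i)"
    using assms En_abs_xbar_less[OF assms(1-3,5)] En_xbar_last_gt_one[OF assms(1-3,5)]
    by (intro mult_left_mono prod_shifted_factors_ge) (auto intro: less_imp_le)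
  also have "\<dots> = (\<Prod>i\<in>{1..n-1}. y n - y i)"
    using prod_diff_eq_xbar[OF nz] by simp
  finally show ?thesis .
qed

lemma En_prod_diff_le:
  fixes x p1 p2 d :: real
  assumes "x > 1" "p1 > 0" "p2 \<ge> 0" "d / (x - 1) \<le> 1/2" "y \<in> En x p1 p2 d n"
  shows "(\<Prod>i\<in>{1..n-1}. y n - y i)
         \<le> (p1 * (x - 1) / (p1 + p2)) ^ (n - 1) *
           exp (real n / (1 - d / (x - 1)) * (((p1 + p2) * y n - p1 * x) / (p1 * (x - 1)))
                - (\<Sum>i\<in>{1..n-1}. xbar x p1 p2 (y i))
                - (1/2 - d / (x - 1)) * (\<Sum>i\<in>{1..n-1}. (xbar x p1 p2 (y i))\<^sup>2))"
proof -
  let ?K = "p1 * (x - 1) / (p1 + p2)" and ?e = "d / (x - 1)"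
    and ?t = "((p1 + p2) * y n - p1 * x) / (p1 * (x - 1))" and ?u = "\<lambda>i. xbar x p1 p2 (y i)"
  let ?S = "(\<Sum>i\<in>{1..n-1}. ?u i) + (1/2 - ?e) * (\<Sum>i\<in>{1..n-1}. (?u i)\<^sup>2)"
  have nz: "x \<noteq> 1" "p1 \<noteq> 0" "p1 + p2 \<noteq> 0"
    using assms(1-3) by auto
  have t_eq: "?t = xbar x p1 p2 (y n) - 1"
    using xbar_minus_one[OF nz(1,2)] by simp
  have "0 \<le> ?t"
    using En_xbar_last_gt_one[OF assms(1-3,5)] t_eq by simp
  have "0 < 1 - ?e"
    using assms(4) by linarith
  have "(\<Prod>i\<in>{1..n-1}. y n - y i) = ?K ^ (n - 1) * (\<Prod>i\<in>{1..n-1}. 1 + ?t - ?u i)"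
    using prod_diff_eq_xbar[OF nz] t_eq by simp
  also have "\<dots> \<le> ?K ^ (n - 1) * exp (real (n - 1) * ?t / (1 - ?e) - ?S)"
    using assms En_abs_xbar_less[OF assms(1-3,5)] \<open>0 \<le> ?t\<close>
      prod_shifted_factors_le[of "{1..n-1}" ?e ?u ?t]
    by (intro mult_left_mono) (auto intro: less_imp_le simp: algebra_simps)
  also have "\<dots> \<le> ?K ^ (n - 1) * exp (real n / (1 - ?e) * ?t - ?S)"
  proof -
    have "real (n - 1) * ?t \<le> real n * ?t"
      using \<open>0 \<le> ?t\<close> by (intro mult_right_mono) auto
    then have "real (n - 1) * ?t / (1 - ?e) \<le> real n * ?t / (1 - ?e)"
      using \<open>0 < 1 - ?e\<close> by (intro divide_right_mono) auto
    also have "\<dots> = real n / (1 - ?e) * ?t"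
      by simp
    finally have "real (n - 1) * ?t / (1 - ?e) \<le> real n / (1 - ?e) * ?t" .
    then show ?thesis
      using assms(1-3) by (intro mult_left_mono exp_mono diff_right_mono) auto
  qed
  finally show ?thesis
    by (simp add: algebra_simps)
qed

theorem lemma6:
  fixes x :: real and p1 p2 :: "nat \<Rightarrow> nat" and \<delta> :: "nat \<Rightarrow> real"
  assumes "x > 1"
    and "\<forall>n. p1 n \<ge> n" and "\<forall>n. p2 n \<ge> n"
    and "\<forall>n. \<delta> n > 0" and "\<delta> \<longlonglongrightarrow> 0"
  shows "(\<exists>c :: nat \<Rightarrow> real. (\<lambda>n. c n / real n) \<longlonglongrightarrow> 1 \<and>
           (\<forall>\<^sub>F n in sequentially. \<forall>y \<in> En x (p1 n) (p2 n) (\<delta> n) n.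
              (\<Prod>i\<in>{1..n-1}. y n - y i)
              \<le> (real (p1 n) * (x - 1) / (real (p1 n) + real (p2 n))) ^ (n - 1) *
                 exp (c n * (((real (p1 n) + real (p2 n)) * y n - real (p1 n) * x) / (real (p1 n) * (x - 1)))
                      - (\<Sum>i\<in>{1..n-1}. xbar x (p1 n) (p2 n) (y i))
                      - (1/2 - \<delta> n / (x - 1)) * (\<Sum>i\<in>{1..n-1}. (xbar x (p1 n) (p2 n) (y i))^2))))
       \<and> (\<forall>\<^sub>F n in sequentially. \<forall>y \<in> En x (p1 n) (p2 n) (\<delta> n) n.
              (\<Prod>i\<in>{1..n-1}. y n - y i)
              \<ge> (real (p1 n) * (x - 1) / (real (p1 n) + real (p2 n))) ^ (n - 1) *
                 exp (- (\<Sum>i\<in>{1..n-1}. xbar x (p1 n) (p2 n) (y i))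
                      - (1/2 + \<delta> n / (x - 1)) * (\<Sum>i\<in>{1..n-1}. (xbar x (p1 n) (p2 n) (y i))^2)))"
proof -
  let ?e = "\<lambda>n. \<delta> n / (x - 1)"
  have "?e \<longlonglongrightarrow> 0"
    using tendsto_divide[OF assms(5) tendsto_const[of "x - 1"]] assms(1) by simp
  then have small: "\<forall>\<^sub>F n in sequentially. ?e n \<le> 1/2"
    using order_tendstoD(2)[of ?e 0 sequentially "1/2"] by (auto elim: eventually_mono)
  have pos: "\<forall>\<^sub>F n in sequentially. 0 < real (p1 n)"
    using eventually_gt_at_top[of 0]
    by eventually_elim (metis assms(2) of_nat_0_less_iff order_less_le_trans)
  define c where "c n = real n / (1 - ?e n)" for n
  have "(\<lambda>n. 1 / (1 - ?e n)) \<longlonglongrightarrow> 1"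
    using tendsto_divide[OF tendsto_const tendsto_diff[OF tendsto_const \<open>?e \<longlonglongrightarrow> 0\<close>], of 1 1] by simp
  then have lim: "(\<lambda>n. c n / real n) \<longlonglongrightarrow> 1"
    by (rule Lim_transform_eventually)
      (use eventually_gt_at_top[of 0] in \<open>eventually_elim, simp add: c_def\<close>)
  show ?thesis
    using En_prod_diff_le[OF assms(1)] En_prod_diff_ge[OF assms(1)]
    by (intro exI[of _ c] conjI lim eventually_mono[OF eventually_conj[OF small pos]])
      (auto simp: c_def)
qed

end
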